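(* Let $K$ be a connected simplicial complex with $d$ vertices $v_1,\ldots,v_d$. Let $0\leq a_1<\cdots<a_d$ be integers such that whenever $a_j-a_i=a_{j'}-a_{i'}$ (for indices $i,j,i',j'\in\{1,\ldots,d\}$) we have $i=j$ or $j=j'$. Let $n>2a_d$ be an integer coprime to all differences $a_j-a_i$ with $j>i$. Let $\widetilde{K}$ be the simplicial complex with vertex set $\mathbb{Z}/n$ whose faces are all sets of the form $\{x+a_{i_1},\ldots,x+a_{i_k}\}$ (addition modulo $n$) where $x\in\mathbb{Z}/n$ and $\{v_{i_1},\ldots,v_{i_k}\}$ is a face of $K$. Then $\widetilde{K}$ is a cluster of $n$ subcomplexes, each isomorphic to $K$.
   Context: A finite simplicial complex $X$ is a cluster of $X_1,\ldots,X_k$ (its parts) if $X_1,\ldots,X_k$ are induced subcomplexes of $X$ with $X=X_1\cup\cdots\cup X_k$ and such that for all $i\neq j$ the intersection $X_i\cap X_j$ is either empty or consists of a single vertex. *)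

theory Defs
  imports Main "HOL-Computational_Algebra.Primes"
begin

definition simplicial_complex :: "'v set set \<Rightarrow> bool" where
  "simplicial_complex X \<longleftrightarrow>
     (\<forall>F\<in>X. finite F \<and> F \<noteq> {} \<and> (\<forall>G. G \<subseteq> F \<and> G \<noteq> {} \<longrightarrow> G \<in> X))"

definition vertices :: "'v set set \<Rightarrow> 'v set" where
  "vertices X = \<Union>X"

definition edge_rel :: "'v set set \<Rightarrow> ('v \<times> 'v) set" where
  "edge_rel X = {(u, v). {u, v} \<in> X}"

definition connected_complex :: "'v set set \<Rightarrow> bool" where
  "connected_complex X \<longleftrightarrow>
     (\<forall>u\<in>vertices X. \<forall>v\<in>vertices X. (u, v) \<in> (edge_rel X)\<^sup>*)"

definition induced_subcomplex :: "'v set set \<Rightarrow> 'v set set \<Rightarrow> bool" where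
  "induced_subcomplex Y X \<longleftrightarrow> Y \<subseteq> X \<and> Y = {F \<in> X. F \<subseteq> vertices Y}"

definition is_cluster :: "'v set set \<Rightarrow> (nat \<Rightarrow> 'v set set) \<Rightarrow> nat \<Rightarrow> bool" where
  "is_cluster X P k \<longleftrightarrow>
     simplicial_complex X \<and> finite X \<and>
     (\<forall>i<k. induced_subcomplex (P i) X) \<and>
     X = (\<Union>i<k. P i) \<and>
     (\<forall>i<k. \<forall>j<k. i \<noteq> j \<longrightarrow> P i \<inter> P j = {} \<or> (\<exists>v. P i \<inter> P j = {{v}}))"

definition isomorphic_complex :: "'v set set \<Rightarrow> 'w set set \<Rightarrow> bool" where
  "isomorphic_complex X Y \<longleftrightarrow>
     (\<exists>f. bij_betw f (vertices X) (vertices Y) \<and> (\<lambda>F. f ` F) ` X = Y)"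

text \<open>The complex on vertex set Z/n (represented as {0..<n}) whose faces are the sets
  {x + a i | v_i in F} mod n, for x in Z/n and F a face of K (vertices of K are indices).\<close>
definition lift_complex :: "nat \<Rightarrow> (nat \<Rightarrow> nat) \<Rightarrow> nat set set \<Rightarrow> nat set set" where
  "lift_complex n a K = {(\<lambda>i. (x + a i) mod n) ` F | x F. x < n \<and> F \<in> K}"

end

theory Submission
  imports Defs
begin

text \<open>
  \<open>K\<^sup>~\<close> is the union of the \<open>n\<close> translates \<open>x + K\<close>, in which vertex \<open>i\<close> of \<open>K\<close> sits at
  \<open>x + a\<^sub>i mod n\<close>. Since all \<open>a\<^sub>i\<close> are below \<open>n/2\<close>, a congruence
  \<open>a\<^sub>j - a\<^sub>i \<equiv> a\<^sub>j' - a\<^sub>i' (mod n)\<close> is an equality of integers. So if two translates meet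
  twice, \<open>x + a\<^sub>i \<equiv> y + a\<^sub>j\<close> and \<open>x + a\<^sub>i' \<equiv> y + a\<^sub>j'\<close>, the Sidon-type hypothesis on the
  \<open>a\<^sub>i\<close> forces \<open>x = y\<close> or \<open>i = i'\<close>. Hence distinct translates share at most one vertex,
  and no face with two vertices of one translate lies inside the vertex set of another, which
  makes every translate an induced subcomplex.
\<close>

lemma face_finite:
  "simplicial_complex X \<Longrightarrow> F \<in> X \<Longrightarrow> finite F"
  unfolding simplicial_complex_def by blast

lemma face_nonempty:
  "simplicial_complex X \<Longrightarrow> F \<in> X \<Longrightarrow> F \<noteq> {}"
  unfolding simplicial_complex_def by blast

lemma face_subset_closed:
  "simplicial_complex X \<Longrightarrow> F \<in> X \<Longrightarrow> G \<subseteq> F \<Longrightarrow> G \<noteq> {} \<Longrightarrow> G \<in> X"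
  unfolding simplicial_complex_def by blast

lemma singleton_face:
  assumes "simplicial_complex X" "v \<in> vertices X"
  shows "{v} \<in> X"
proof -
  obtain F where "F \<in> X" "v \<in> F" using assms(2) unfolding vertices_def by blast
  then show ?thesis using face_subset_closed[OF assms(1)] by blast
qed

lemma simplicial_complex_image:
  assumes "simplicial_complex K"
  shows "simplicial_complex ((`) f ` K)"
  unfolding simplicial_complex_def
proof
  fix G assume "G \<in> (`) f ` K"
  then obtain F where F: "F \<in> K" "G = f ` F" by blast
  have "H \<in> (`) f ` K" if H: "H \<subseteq> G" "H \<noteq> {}" for H
  proof -
    let ?F = "{i \<in> F. f i \<in> H}"
    have "?F \<subseteq> F" by blast
    moreover have "?F \<noteq> {}" using H F(2) by blast
    ultimately have "?F \<in> K" by (rule face_subset_closed[OF assms F(1)])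
    moreover have "H = f ` ?F" using F(2) H(1) by blast
    ultimately show ?thesis by blast
  qed
  then show "finite G \<and> G \<noteq> {} \<and> (\<forall>H. H \<subseteq> G \<and> H \<noteq> {} \<longrightarrow> H \<in> (`) f ` K)"
    using face_finite[OF assms F(1)] face_nonempty[OF assms F(1)] F(2) by blast
qed

lemma simplicial_complex_UN:
  assumes "\<And>i. i \<in> I \<Longrightarrow> simplicial_complex (X i)"
  shows "simplicial_complex (\<Union>i\<in>I. X i)"
  unfolding simplicial_complex_def
proof
  fix F assume "F \<in> (\<Union>i\<in>I. X i)"
  then obtain i where i: "i \<in> I" "F \<in> X i" by blast
  then show "finite F \<and> F \<noteq> {} \<and> (\<forall>G. G \<subseteq> F \<and> G \<noteq> {} \<longrightarrow> G \<in> (\<Union>i\<in>I. X i))"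
    using face_finite[OF assms[OF i(1)] i(2)] face_nonempty[OF assms[OF i(1)] i(2)]
      face_subset_closed[OF assms[OF i(1)] i(2)] by blast
qed

lemma vertices_image: "vertices ((`) f ` K) = f ` vertices K"
  unfolding vertices_def by auto

lemma isomorphic_complex_image:
  assumes "inj_on f (vertices K)"
  shows "isomorphic_complex ((`) f ` K) K"
proof -
  let ?g = "the_inv_into (vertices K) f"
  have "bij_betw ?g (f ` vertices K) (vertices K)"
    using assms bij_betw_the_inv_into inj_on_imp_bij_betw by blast
  moreover have "?g ` f ` F = F" if "F \<in> K" for F
  proof -
    have "F \<subseteq> vertices K" using that unfolding vertices_def by blast
    then show ?thesis using the_inv_into_f_f[OF assms] by (force simp: image_image)
  qed
  then have "(`) ?g ` (`) f ` K = K" by (simp add: image_image)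
  ultimately show ?thesis
    unfolding isomorphic_complex_def vertices_image by blast
qed

lemma induced_subcomplex_Int:
  assumes "induced_subcomplex Y X" "induced_subcomplex Z X"
  shows "Y \<inter> Z = {F \<in> X. F \<subseteq> vertices Y \<inter> vertices Z}"
  using assms unfolding induced_subcomplex_def by blast

lemma induced_subcomplex_Int_vertex:
  assumes "simplicial_complex X" "induced_subcomplex Y X" "induced_subcomplex Z X"
    and "\<And>v w. v \<in> vertices Y \<inter> vertices Z \<Longrightarrow> w \<in> vertices Y \<inter> vertices Z \<Longrightarrow> v = w"
  shows "Y \<inter> Z = {} \<or> (\<exists>v. Y \<inter> Z = {{v}})"
proof (cases "vertices Y \<inter> vertices Z = {}")
  case True
  have "Y \<inter> Z = {F \<in> X. F \<subseteq> {}}"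
    using True induced_subcomplex_Int[OF assms(2,3)] by simp
  also have "\<dots> = {}" using face_nonempty[OF assms(1)] by blast
  finally show ?thesis ..
next
  case False
  then obtain v where v: "vertices Y \<inter> vertices Z = {v}" using assms(4) by blast
  have "vertices Y \<subseteq> vertices X"
    using assms(2) unfolding induced_subcomplex_def vertices_def by blast
  then have "{v} \<in> X" using singleton_face[OF assms(1)] v by blast
  have "Y \<inter> Z = {F \<in> X. F \<subseteq> {v}}"
    using v induced_subcomplex_Int[OF assms(2,3)] by simp
  also have "\<dots> = {{v}}"
    using \<open>{v} \<in> X\<close> face_nonempty[OF assms(1)] by (auto simp: subset_singleton_iff)
  finally show ?thesis by blast
qed

lemma int_dvd_abs_less_imp_zero:
  fixes z :: int
  assumes "int n dvd z" "\<bar>z\<bar> < int n"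
  shows "z = 0"
  using dvd_imp_le_int[of z "int n"] assms by force

lemma mod_eq_imp_int_dvd:
  fixes x y n :: nat
  assumes "x mod n = y mod n"
  shows "int n dvd int x - int y"
  using assms by (metis mod_eq_dvd_iff of_nat_mod)

lemma mod_add_cancel_less:
  fixes p q x n :: nat
  assumes "(p + x) mod n = (q + x) mod n" "p < n" "q < n"
  shows "p = q"
proof -
  have "int n dvd int p - int q" using mod_eq_imp_int_dvd[OF assms(1)] by simp
  then show ?thesis using int_dvd_abs_less_imp_zero[of n "int p - int q"] assms(2,3) by simp
qed

text \<open>The congruences give \<open>q - p \<equiv> s - r (mod n)\<close>, and both sides lie strictly between
  \<open>-n/2\<close> and \<open>n/2\<close>.\<close>
lemma mod_eq_shifts_imp_diff_eq:
  fixes n x y p q r s :: nat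
  assumes "(x + p) mod n = (y + q) mod n" "(x + r) mod n = (y + s) mod n"
    and "2 * p < n" "2 * q < n" "2 * r < n" "2 * s < n"
  shows "int q - int p = int s - int r"
proof -
  have "int n dvd (int (x + p) - int (y + q)) - (int (x + r) - int (y + s))"
    using mod_eq_imp_int_dvd[OF assms(1)] mod_eq_imp_int_dvd[OF assms(2)] by (rule dvd_diff)
  also have "\<dots> = (int s - int r) - (int q - int p)" by simp
  finally have "int n dvd (int s - int r) - (int q - int p)" .
  moreover have "\<bar>(int s - int r) - (int q - int p)\<bar> < int n" using assms(3-6) by linarith
  ultimately have "(int s - int r) - (int q - int p) = 0" by (rule int_dvd_abs_less_imp_zero)
  then show ?thesis by simp
qed

definition shift :: "nat \<Rightarrow> (nat \<Rightarrow> nat) \<Rightarrow> nat \<Rightarrow> nat \<Rightarrow> nat" where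
  "shift n a x i = (x + a i) mod n"

lemma lift_complex_eq_UN: "lift_complex n a K = (\<Union>x<n. (`) (shift n a x) ` K)"
  unfolding lift_complex_def shift_def by auto

locale sidon_translates =
  fixes n :: nat and A :: "nat set" and a :: "nat \<Rightarrow> nat"
  assumes small: "\<And>i. i \<in> A \<Longrightarrow> 2 * a i < n"
    and inj: "inj_on a A"
    and sidon: "\<And>i j i' j'. i \<in> A \<Longrightarrow> j \<in> A \<Longrightarrow> i' \<in> A \<Longrightarrow> j' \<in> A \<Longrightarrow>
        int (a j) - int (a i) = int (a j') - int (a i') \<Longrightarrow> i = j \<or> j = j'"
begin

lemma inj_on_shift: "inj_on (shift n a x) A"
proof (rule inj_onI)
  fix i i' assume "i \<in> A" "i' \<in> A" "shift n a x i = shift n a x i'"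
  then have "(a i + x) mod n = (a i' + x) mod n" by (simp add: shift_def add.commute)
  moreover have "a i < n" "a i' < n" using small \<open>i \<in> A\<close> \<open>i' \<in> A\<close> by fastforce+
  ultimately have "a i = a i'" by (rule mod_add_cancel_less)
  then show "i = i'" using inj \<open>i \<in> A\<close> \<open>i' \<in> A\<close> by (simp add: inj_on_eq_iff)
qed

lemma shifts_meet_twice:
  assumes "x < n" "y < n" "i \<in> A" "j \<in> A" "i' \<in> A" "j' \<in> A"
    and "shift n a y i = shift n a x j" "shift n a y i' = shift n a x j'"
  shows "x = y \<or> i = i'"
proof -
  have "int (a j) - int (a i) = int (a j') - int (a i')"
    using mod_eq_shifts_imp_diff_eq assms small unfolding shift_def by blast
  then consider "i = j" | "j = j'" using sidon assms(3-6) by blast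
  then show ?thesis
  proof cases
    case 1
    then have "(y + a i) mod n = (x + a i) mod n" using assms(7) by (simp add: shift_def)
    then show ?thesis using mod_add_cancel_less[of y "a i" n x] assms(1,2) by (simp add: add.commute)
  next
    case 2
    then have "shift n a y i = shift n a y i'" using assms(7,8) by simp
    then show ?thesis using inj_onD[OF inj_on_shift] assms(3,5) by blast
  qed
qed

lemma shift_images_Int_subsingleton:
  assumes "x < n" "y < n" "x \<noteq> y"
    and "v \<in> shift n a x ` A \<inter> shift n a y ` A" "w \<in> shift n a x ` A \<inter> shift n a y ` A"
  shows "v = w"
proof -
  obtain i i' j j' where "i \<in> A" "i' \<in> A" "j \<in> A" "j' \<in> A"
    "v = shift n a x i" "v = shift n a y j" "w = shift n a x i'" "w = shift n a y j'"
    using assms(4,5) by blast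
  then show ?thesis using shifts_meet_twice[OF assms(2,1), of i j i' j'] assms(3) by auto
qed

lemma shift_image_subset_imp_eq:
  assumes "x < n" "y < n" "F \<subseteq> A" "i \<in> F" "i' \<in> F" "i \<noteq> i'"
    and "shift n a y ` F \<subseteq> shift n a x ` A"
  shows "y = x"
proof -
  obtain j j' where j: "j \<in> A" "j' \<in> A"
    "shift n a y i = shift n a x j" "shift n a y i' = shift n a x j'"
    using assms(4,5,7) by blast
  have "i \<in> A" "i' \<in> A" using assms(3-5) by blast+
  then show ?thesis using shifts_meet_twice[OF assms(1,2) _ j(1) _ j(2) j(3,4)] assms(6) by blast
qed

lemma finite_index_set: "finite A"
proof (rule finite_imageD[OF _ inj])
  have "a ` A \<subseteq> {..<n}" using small by fastforce
  then show "finite (a ` A)" using finite_subset by blast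
qed

context
  fixes K :: "nat set set"
  assumes complex: "simplicial_complex K" and vertices: "vertices K = A"
begin

lemma faces_subset: "F \<in> K \<Longrightarrow> F \<subseteq> A"
  using vertices unfolding vertices_def by blast

lemma simplicial_complex_shift_copy: "simplicial_complex ((`) (shift n a x) ` K)"
  by (rule simplicial_complex_image[OF complex])

lemma vertices_shift_copy: "vertices ((`) (shift n a x) ` K) = shift n a x ` A"
  by (simp add: vertices_image vertices)

lemma simplicial_complex_lift_complex: "simplicial_complex (lift_complex n a K)"
  unfolding lift_complex_eq_UN by (intro simplicial_complex_UN simplicial_complex_shift_copy)

lemma finite_lift_complex: "finite (lift_complex n a K)"
proof -
  have "K \<subseteq> Pow A" using faces_subset by blast
  then have "finite K" using finite_index_set finite_subset by blast
  then show ?thesis unfolding lift_complex_eq_UN by simp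
qed

text \<open>A face of another translate lying inside \<open>x + A\<close> either has two vertices, which forces
  the translates to coincide, or is a single vertex, which is a face of every translate containing it.\<close>
lemma induced_subcomplex_shift_copy:
  assumes "x < n"
  shows "induced_subcomplex ((`) (shift n a x) ` K) (lift_complex n a K)"
proof -
  let ?C = "(`) (shift n a x) ` K"
  have copy_subset: "?C \<subseteq> lift_complex n a K"
    unfolding lift_complex_eq_UN using assms by blast
  have copy_faces: "G \<subseteq> shift n a x ` A" if "G \<in> ?C" for G
    using that vertices_shift_copy unfolding vertices_def by blast
  have faces_in_copy: "G \<in> ?C" if G: "G \<in> lift_complex n a K" "G \<subseteq> shift n a x ` A" for G
  proof -
    obtain y F where yF: "y < n" "F \<in> K" "G = shift n a y ` F"
      using G(1) unfolding lift_complex_eq_UN by blast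
    show ?thesis
    proof (cases "\<exists>i i'. i \<in> F \<and> i' \<in> F \<and> i \<noteq> i'")
      case True
      then have "y = x"
        using shift_image_subset_imp_eq[OF assms yF(1) faces_subset[OF yF(2)]] yF(3) G(2) by blast
      then show ?thesis using yF by blast
    next
      case False
      moreover have "F \<noteq> {}" by (rule face_nonempty[OF complex yF(2)])
      ultimately obtain v where "G = {v}" "v \<in> vertices ?C"
        using yF(3) G(2) vertices_shift_copy by blast
      then show ?thesis using singleton_face[OF simplicial_complex_shift_copy] by blast
    qed
  qed
  have "?C = {G \<in> lift_complex n a K. G \<subseteq> shift n a x ` A}"
  proof (intro equalityI subsetI)
    fix G assume "G \<in> ?C"
    then show "G \<in> {G \<in> lift_complex n a K. G \<subseteq> shift n a x ` A}"
      using copy_subset copy_faces by blast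
  next
    fix G assume "G \<in> {G \<in> lift_complex n a K. G \<subseteq> shift n a x ` A}"
    then show "G \<in> ?C" using faces_in_copy by blast
  qed
  with copy_subset show ?thesis
    unfolding induced_subcomplex_def vertices_shift_copy by (rule conjI)
qed

lemma shift_copies_Int:
  assumes "x < n" "y < n" "x \<noteq> y"
  shows "(`) (shift n a x) ` K \<inter> (`) (shift n a y) ` K = {}
    \<or> (\<exists>v. (`) (shift n a x) ` K \<inter> (`) (shift n a y) ` K = {{v}})"
proof (rule induced_subcomplex_Int_vertex[OF simplicial_complex_lift_complex
      induced_subcomplex_shift_copy[OF assms(1)] induced_subcomplex_shift_copy[OF assms(2)]])
  fix v w
  assume "v \<in> vertices ((`) (shift n a x) ` K) \<inter> vertices ((`) (shift n a y) ` K)"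
    "w \<in> vertices ((`) (shift n a x) ` K) \<inter> vertices ((`) (shift n a y) ` K)"
  then show "v = w"
    unfolding vertices_shift_copy by (rule shift_images_Int_subsingleton[OF assms])
qed

lemma isomorphic_complex_shift_copy: "isomorphic_complex ((`) (shift n a x) ` K) K"
  by (rule isomorphic_complex_image) (simp add: vertices inj_on_shift)

end

end

theorem proposition3p1:
  fixes K :: "nat set set" and d n :: nat and a :: "nat \<Rightarrow> nat"
  assumes "simplicial_complex K"
    and "connected_complex K"
    and "vertices K = {1..d}"
    and "strict_mono_on {1..d} a"
    and "\<forall>i\<in>{1..d}. \<forall>j\<in>{1..d}. \<forall>i'\<in>{1..d}. \<forall>j'\<in>{1..d}.
           int (a j) - int (a i) = int (a j') - int (a i') \<longrightarrow> i = j \<or> j = j'"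
    and "n > 2 * a d"
    and "\<forall>i\<in>{1..d}. \<forall>j\<in>{1..d}. i < j \<longrightarrow> coprime n (a j - a i)"
  shows "\<exists>P. is_cluster (lift_complex n a K) P n \<and> (\<forall>i<n. isomorphic_complex (P i) K)"
proof -
  have small: "2 * a i < n" if "i \<in> {1..d}" for i
    using that assms(6) strict_mono_on_leD[OF assms(4), of i d] by fastforce
  have inj: "inj_on a {1..d}" using assms(4) strict_mono_on_imp_inj_on by blast
  have sidon: "i = j \<or> j = j'"
    if "i \<in> {1..d}" "j \<in> {1..d}" "i' \<in> {1..d}" "j' \<in> {1..d}"
      "int (a j) - int (a i) = int (a j') - int (a i')" for i j i' j'
    using assms(5) that by blast
  interpret sidon_translates n "{1..d}" a
    by (rule sidon_translates.intro[OF small inj sidon])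
  define P where "P x = (`) (shift n a x) ` K" for x
  have "is_cluster (lift_complex n a K) P n"
    unfolding is_cluster_def
  proof (intro conjI allI impI)
    show "simplicial_complex (lift_complex n a K)"
      by (rule simplicial_complex_lift_complex[OF assms(1,3)])
    show "finite (lift_complex n a K)" by (rule finite_lift_complex[OF assms(1,3)])
    show "lift_complex n a K = (\<Union>x<n. P x)" unfolding P_def by (rule lift_complex_eq_UN)
    show "induced_subcomplex (P x) (lift_complex n a K)" if "x < n" for x
      unfolding P_def by (rule induced_subcomplex_shift_copy[OF assms(1,3) that])
    show "P x \<inter> P y = {} \<or> (\<exists>v. P x \<inter> P y = {{v}})" if "x < n" "y < n" "x \<noteq> y" for x y
      unfolding P_def by (rule shift_copies_Int[OF assms(1,3) that])
  qed
  moreover have "isomorphic_complex (P x) K" for x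
    unfolding P_def by (rule isomorphic_complex_shift_copy[OF assms(1,3)])
  ultimately show ?thesis by blast
qed

end
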